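(* Let $\{G_j\}_{j\in J}$ be a family of metrizable topological groups. Let $\mathbb I=[J]^{\leq\omega}$ be the set of countable subsets of $J$ ordered by inclusion, and for $D\in\mathbb I$ let $G_D=\prod_{j\in D}G_j\times\prod_{j\notin D}\{e_j\}\subseteq\prod_{j\in J}G_j$ with the product topology. Then $\{G_D\}_{D\in\mathbb I}$ (with inclusions as bonding maps) satisfies ACP, and $\operatorname{colim}_{D\in\mathbb I}G_D=\sum_{j\in J}(G_j,e_j)$.
   Context: For pointed spaces $(Y_j,0_j)$, the $\Sigma$-product $\sum_{j\in J}(Y_j,0_j)$ is the set of $y\in\prod_jY_j$ whose support $\{j\mid y_j\neq0_j\}$ is countable, with the topology induced by the product topology. $\operatorname{colim}$ denotes the union $\bigcup_DG_D$ with the colimit space topology $\{U\mid U\cap G_D\text{ open in }G_D\ \forall D\}$. ACP means that this colimit space topology coincides with the finest group topology on the union making all inclusions continuous (equivalently, the union with the colimit space topology is a topological group). *)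

theory Defs
  imports "HOL-Analysis.Analysis" "HOL-Algebra.Product_Groups"
begin

definition topological_group :: "('a, 'b) monoid_scheme \<Rightarrow> 'a topology \<Rightarrow> bool" where
  "topological_group H X \<longleftrightarrow> group H \<and> topspace X = carrier H \<and>
     continuous_map (prod_topology X X) X (\<lambda>(x, y). x \<otimes>\<^bsub>H\<^esub> y) \<and>
     continuous_map X X (\<lambda>x. inv\<^bsub>H\<^esub> x)"

definition sigma_product_set :: "('j \<Rightarrow> 'a topology) \<Rightarrow> 'j set \<Rightarrow> ('j \<Rightarrow> 'a) \<Rightarrow> ('j \<Rightarrow> 'a) set" where
  "sigma_product_set Y J z = {y \<in> topspace (product_topology Y J). countable {j \<in> J. y j \<noteq> z j}}"

definition sigma_product :: "('j \<Rightarrow> 'a topology) \<Rightarrow> 'j set \<Rightarrow> ('j \<Rightarrow> 'a) \<Rightarrow> ('j \<Rightarrow> 'a) topology" where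
  "sigma_product Y J z = subtopology (product_topology Y J) (sigma_product_set Y J z)"

definition colimit_topology :: "'i set \<Rightarrow> ('i \<Rightarrow> 'a topology) \<Rightarrow> 'a topology" where
  "colimit_topology I Y = topology (\<lambda>U. U \<subseteq> (\<Union>i\<in>I. topspace (Y i)) \<and>
       (\<forall>i\<in>I. openin (Y i) (U \<inter> topspace (Y i))))"

text \<open>ACP for a family of subgroups Y_i (i in I) of an ambient group H: the union with
  the colimit space topology is a topological group (the equivalent form of ACP).\<close>
definition ACP :: "'i set \<Rightarrow> ('i \<Rightarrow> 'a topology) \<Rightarrow> ('a, 'b) monoid_scheme \<Rightarrow> bool" where
  "ACP I Y H \<longleftrightarrow>
     topological_group (H\<lparr>carrier := (\<Union>i\<in>I. topspace (Y i))\<rparr>) (colimit_topology I Y)"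

definition face_set :: "('j \<Rightarrow> ('a, 'b) monoid_scheme) \<Rightarrow> 'j set \<Rightarrow> 'j set \<Rightarrow> ('j \<Rightarrow> 'a) set" where
  "face_set G J D = {x \<in> (\<Pi>\<^sub>E j\<in>J. carrier (G j)). \<forall>j\<in>J - D. x j = \<one>\<^bsub>G j\<^esub>}"

end

theory Submission
  imports Defs
begin

(*
  The Sigma-product is a subgroup of the product of the topological groups G_j, hence a
  topological group in the subspace topology. Both claims therefore follow once the colimit
  topology of the faces G_D is shown to be the subspace topology of the Sigma-product; the
  inclusions being continuous, only one direction needs work. Let U meet every countable face
  in a relatively open set and suppose U is not a neighbourhood of some x in U. The factors are
  metrizable, so each coordinate of x has a decreasing countable neighbourhood base, and for
  every finite set F of coordinates and every n one can pick a point of the Sigma-product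
  outside U in the basic box of level n around x over F. Closing the support of x under the
  countably many supports of these points yields a countable D whose face G_D contains x and
  such points arbitrarily close to x, contradicting the openness of U on G_D.
*)

lemma first_countable_decseq_base:
  assumes "first_countable X" and x: "x \<in> topspace X"
  obtains b :: "nat \<Rightarrow> 'a set"
  where "\<And>n. openin X (b n)" "\<And>n. x \<in> b n" "decseq b"
    "\<And>U. openin X U \<Longrightarrow> x \<in> U \<Longrightarrow> \<exists>n. b n \<subseteq> U"
proof -
  obtain \<B> where "countable \<B>" and opens: "\<And>V. V \<in> \<B> \<Longrightarrow> openin X V"
    and base: "\<And>U. openin X U \<Longrightarrow> x \<in> U \<Longrightarrow> \<exists>V \<in> \<B>. x \<in> V \<and> V \<subseteq> U"
    using assms unfolding first_countable_def by meson
  define \<C> where "\<C> = {V \<in> \<B>. x \<in> V}"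
  have "countable \<C>"
    using \<open>countable \<B>\<close> by (simp add: \<C>_def)
  have "\<C> \<noteq> {}"
    using base [of "topspace X"] x by (auto simp: \<C>_def)
  define c where "c = from_nat_into \<C>"
  have c: "c n \<in> \<C>" for n
    using \<open>\<C> \<noteq> {}\<close> by (simp add: c_def from_nat_into)
  show thesis
  proof
    show "openin X (\<Inter>i\<le>n. c i)" for n
      using c opens by (auto simp: \<C>_def)
    show "x \<in> (\<Inter>i\<le>n. c i)" for n
      using c by (auto simp: \<C>_def)
    show "decseq (\<lambda>n. \<Inter>i\<le>n. c i)"
      by (auto simp: decseq_def)
    show "\<exists>n. (\<Inter>i\<le>n. c i) \<subseteq> U" if U: "openin X U" "x \<in> U" for U
    proof -
      obtain V where "V \<in> \<C>" "V \<subseteq> U"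
        using base [OF U] by (auto simp: \<C>_def)
      then obtain n where "c n = V"
        using from_nat_into_surj [OF \<open>countable \<C>\<close>] by (metis c_def)
      then show ?thesis
        using \<open>V \<subseteq> U\<close> by auto
    qed
  qed
qed

lemma countable_closure_under_finite_subsets:
  fixes \<Phi> :: "'a set \<Rightarrow> 'a set"
  assumes "countable D\<^sub>0" and \<Phi>: "\<And>F. finite F \<Longrightarrow> countable (\<Phi> F)"
  obtains D where "D\<^sub>0 \<subseteq> D" "countable D" "D \<subseteq> D\<^sub>0 \<union> (\<Union>F. \<Phi> F)"
    "\<And>F. finite F \<Longrightarrow> F \<subseteq> D \<Longrightarrow> \<Phi> F \<subseteq> D"
proof -
  define step where "step D = D \<union> (\<Union>F \<in> {F. finite F \<and> F \<subseteq> D}. \<Phi> F)" for D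
  define Dn where "Dn n = (step ^^ n) D\<^sub>0" for n
  have Dn_Suc: "Dn (Suc n) = step (Dn n)" for n
    by (simp add: Dn_def)
  have countable_Dn: "countable (Dn n)" for n
  proof (induction n)
    case (Suc n)
    then show ?case
      unfolding Dn_Suc step_def
      by (intro countable_Un countable_UN countable_Collect_finite_subset) (auto intro: \<Phi>)
  qed (simp add: Dn_def \<open>countable D\<^sub>0\<close>)
  have Dn_generated: "Dn n \<subseteq> D\<^sub>0 \<union> (\<Union>F. \<Phi> F)" for n
    by (induction n) (auto simp: Dn_def step_def)
  have "incseq Dn"
    by (rule incseq_SucI) (simp add: Dn_Suc step_def)
  show thesis
  proof
    show "D\<^sub>0 \<subseteq> (\<Union>n. Dn n)"
      using UN_upper [of 0 UNIV Dn] by (simp add: Dn_def)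
    show "countable (\<Union>n. Dn n)"
      by (simp add: countable_Dn)
    show "(\<Union>n. Dn n) \<subseteq> D\<^sub>0 \<union> (\<Union>F. \<Phi> F)"
      using Dn_generated by blast
    show "\<Phi> F \<subseteq> (\<Union>n. Dn n)" if F: "finite F" "F \<subseteq> (\<Union>n. Dn n)" for F
    proof -
      have "Dn m \<subseteq> Dn m' \<or> Dn m' \<subseteq> Dn m" for m m'
        using \<open>incseq Dn\<close> nat_le_linear by (metis incseq_def)
      then have "subset.chain UNIV (range Dn)"
        by (auto simp: subset.chain_def)
      then obtain n where "F \<subseteq> Dn n"
        using finite_subset_Union_chain [OF \<open>finite F\<close>] F(2) by blast
      then have "\<Phi> F \<subseteq> Dn (Suc n)"
        using \<open>finite F\<close> by (auto simp: Dn_Suc step_def)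
      then show ?thesis
        by blast
    qed
  qed
qed

lemma topological_group_subgroup:
  assumes tg: "topological_group H X" and S: "subgroup S H"
  shows "topological_group (H\<lparr>carrier := S\<rparr>) (subtopology X S)"
proof -
  have grp: "group H" and ts: "topspace X = carrier H"
   and mult: "continuous_map (prod_topology X X) X (\<lambda>(x, y). x \<otimes>\<^bsub>H\<^esub> y)"
   and inv: "continuous_map X X (\<lambda>x. inv\<^bsub>H\<^esub> x)"
    using tg by (auto simp: topological_group_def)
  have SX: "S \<subseteq> topspace X"
    using S ts subgroup.subset by blast
  have "continuous_map (prod_topology (subtopology X S) (subtopology X S)) (subtopology X S)
          (\<lambda>(x, y). x \<otimes>\<^bsub>H\<^esub> y)"
    unfolding subtopology_Times [symmetric]
    by (intro continuous_map_into_subtopology continuous_map_from_subtopology mult)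
       (auto simp: subgroup.m_closed [OF S])
  moreover have "continuous_map (subtopology X S) (subtopology X S) (\<lambda>x. inv\<^bsub>H\<lparr>carrier := S\<rparr>\<^esub> x)"
  proof (rule continuous_map_eq)
    show "continuous_map (subtopology X S) (subtopology X S) (\<lambda>x. inv\<^bsub>H\<^esub> x)"
      by (intro continuous_map_into_subtopology continuous_map_from_subtopology inv)
         (auto simp: subgroup.m_inv_closed [OF S])
  qed (simp add: group.m_inv_consistent [OF grp S])
  ultimately show ?thesis
    using SX by (simp add: topological_group_def subgroup.subgroup_is_group [OF S grp] Int_absorb1)
qed

lemma topological_group_product:
  assumes tg: "\<And>j. j \<in> J \<Longrightarrow> topological_group (G j) (T j)"
  shows "topological_group (product_group J G) (product_topology T J)"
proof -
  have grp: "\<And>j. j \<in> J \<Longrightarrow> group (G j)"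
    and ts: "\<And>j. j \<in> J \<Longrightarrow> topspace (T j) = carrier (G j)"
    and mult: "\<And>j. j \<in> J \<Longrightarrow> continuous_map (prod_topology (T j) (T j)) (T j) (\<lambda>(x, y). x \<otimes>\<^bsub>G j\<^esub> y)"
    and inv: "\<And>j. j \<in> J \<Longrightarrow> continuous_map (T j) (T j) (\<lambda>x. inv\<^bsub>G j\<^esub> x)"
    using tg by (auto simp: topological_group_def)
  let ?P = "product_topology T J"
  have tsP: "topspace ?P = carrier (product_group J G)"
    using ts by (auto intro: PiE_cong)
  have "continuous_map (prod_topology ?P ?P) ?P (\<lambda>(x, y). \<lambda>j\<in>J. x j \<otimes>\<^bsub>G j\<^esub> y j)"
    unfolding continuous_map_componentwise
  proof (intro conjI ballI)
    fix j assume j: "j \<in> J"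
    have pair: "continuous_map (prod_topology ?P ?P) (prod_topology (T j) (T j)) (\<lambda>(x, y). (x j, y j))"
      by (simp add: continuous_map_prod_top continuous_map_product_projection [OF j])
    show "continuous_map (prod_topology ?P ?P) (T j) (\<lambda>p. (case p of (x, y) \<Rightarrow> \<lambda>j\<in>J. x j \<otimes>\<^bsub>G j\<^esub> y j) j)"
      using continuous_map_compose [OF pair mult [OF j]] j by (simp add: o_def case_prod_unfold)
  qed auto
  moreover have "continuous_map ?P ?P (\<lambda>x. inv\<^bsub>product_group J G\<^esub> x)"
  proof (rule continuous_map_eq)
    show "continuous_map ?P ?P (\<lambda>x. \<lambda>j\<in>J. inv\<^bsub>G j\<^esub> x j)"
      unfolding continuous_map_componentwise
    proof (intro conjI ballI)
      fix j assume j: "j \<in> J"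
      show "continuous_map ?P (T j) (\<lambda>x. (\<lambda>j\<in>J. inv\<^bsub>G j\<^esub> x j) j)"
        using continuous_map_compose [OF continuous_map_product_projection [of j J T, OF j] inv [OF j]] j
        by (simp add: o_def)
    qed auto
  qed (use tsP grp in simp)
  ultimately show ?thesis
    using tsP grp by (simp add: topological_group_def)
qed

lemma subgroup_sigma_product_set:
  assumes grp: "\<And>j. j \<in> J \<Longrightarrow> group (G j)"
    and ts: "\<And>j. j \<in> J \<Longrightarrow> topspace (T j) = carrier (G j)"
  shows "subgroup (sigma_product_set T J (\<lambda>j. \<one>\<^bsub>G j\<^esub>)) (product_group J G)"
proof -
  let ?S = "{x \<in> \<Pi>\<^sub>E j\<in>J. carrier (G j). countable {j \<in> J. x j \<noteq> \<one>\<^bsub>G j\<^esub>}}"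
  have S: "sigma_product_set T J (\<lambda>j. \<one>\<^bsub>G j\<^esub>) = ?S"
    unfolding sigma_product_set_def topspace_product_topology using ts
    by (metis (no_types, lifting) PiE_cong o_apply)
  have "group (product_group J G)"
    using grp by simp
  then show ?thesis
    unfolding S
  proof (rule group.subgroupI)
    show "?S \<subseteq> carrier (product_group J G)"
      by auto
    have "(\<lambda>j\<in>J. \<one>\<^bsub>G j\<^esub>) \<in> ?S"
      using grp by (simp add: group.is_monoid)
    then show "?S \<noteq> {}"
      by blast
  next
    fix x y
    assume x: "x \<in> ?S" and y: "y \<in> ?S"
    have "{j \<in> J. x j \<otimes>\<^bsub>G j\<^esub> y j \<noteq> \<one>\<^bsub>G j\<^esub>}
        \<subseteq> {j \<in> J. x j \<noteq> \<one>\<^bsub>G j\<^esub>} \<union> {j \<in> J. y j \<noteq> \<one>\<^bsub>G j\<^esub>}"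
      using grp by (auto simp: group.is_monoid)
    then show "x \<otimes>\<^bsub>product_group J G\<^esub> y \<in> ?S"
      using x y grp by (auto simp: PiE_iff monoid.m_closed group.is_monoid intro: countable_subset)
    show "inv\<^bsub>product_group J G\<^esub> x \<in> ?S"
      using x grp by (auto simp: PiE_iff group.inv_eq_1_iff conj_commute cong: rev_conj_cong)
  qed
qed

definition product_face :: "('j \<Rightarrow> 'a topology) \<Rightarrow> 'j set \<Rightarrow> ('j \<Rightarrow> 'a) \<Rightarrow> 'j set \<Rightarrow> ('j \<Rightarrow> 'a) set" where
  "product_face T J z D = {y \<in> topspace (product_topology T J). \<forall>j \<in> J - D. y j = z j}"

definition product_box :: "('j \<Rightarrow> 'a topology) \<Rightarrow> 'j set \<Rightarrow> 'j set \<Rightarrow> ('j \<Rightarrow> 'a set) \<Rightarrow> ('j \<Rightarrow> 'a) set" where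
  "product_box T J F V = (\<Pi>\<^sub>E j\<in>J. if j \<in> F then V j else topspace (T j))"

lemma openin_product_box:
  assumes "finite F" and "\<And>j. j \<in> J \<Longrightarrow> j \<in> F \<Longrightarrow> openin (T j) (V j)"
  shows "openin (product_topology T J) (product_box T J F V)"
  unfolding product_box_def openin_PiE_gen
  using assms by (auto intro: finite_subset [OF _ \<open>finite F\<close>])

lemma product_topology_decseq_box_base:
  assumes decseq: "\<And>j. j \<in> J \<Longrightarrow> decseq (b j)"
    and base: "\<And>j U. j \<in> J \<Longrightarrow> openin (T j) U \<Longrightarrow> x j \<in> U \<Longrightarrow> \<exists>n. b j n \<subseteq> U"
    and W: "openin (product_topology T J) W" "x \<in> W"
  obtains F n where "finite F" "product_box T J F (\<lambda>j. b j n) \<subseteq> W"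
proof -
  obtain V where finV: "finite {j \<in> J. V j \<noteq> topspace (T j)}"
    and openV: "\<forall>j \<in> J. openin (T j) (V j)" and "x \<in> Pi\<^sub>E J V" "Pi\<^sub>E J V \<subseteq> W"
    using W unfolding openin_product_topology_alt by blast
  define F where "F = {j \<in> J. V j \<noteq> topspace (T j)}"
  have "\<forall>j \<in> F. \<exists>k. b j k \<subseteq> V j"
    using base openV \<open>x \<in> Pi\<^sub>E J V\<close> by (auto simp: F_def PiE_iff)
  then obtain k where k: "\<And>j. j \<in> F \<Longrightarrow> b j (k j) \<subseteq> V j"
    by metis
  define n where "n = Max (k ` F)"
  have "b j n \<subseteq> V j" if "j \<in> F" for j
  proof -
    have "k j \<le> n"
      using finV that by (simp add: n_def F_def)
    moreover have "j \<in> J"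
      using that by (simp add: F_def)
    ultimately have "b j n \<subseteq> b j (k j)"
      using decseq by (simp add: decseq_def)
    then show ?thesis
      using k that by blast
  qed
  then have "product_box T J F (\<lambda>j. b j n) \<subseteq> Pi\<^sub>E J V"
    unfolding product_box_def by (intro PiE_mono) (auto simp: F_def)
  then show thesis
    using that finV \<open>Pi\<^sub>E J V \<subseteq> W\<close> F_def by blast
qed

lemma countable_face_meets_selection:
  fixes a :: "'j set \<Rightarrow> nat \<Rightarrow> 'j \<Rightarrow> 'a"
  assumes x: "x \<in> sigma_product_set T J z"
    and b_mem: "\<And>j n. j \<in> J \<Longrightarrow> x j \<in> b j n"
    and b_decseq: "\<And>j. j \<in> J \<Longrightarrow> decseq (b j)"
    and b_base: "\<And>j U. j \<in> J \<Longrightarrow> openin (T j) U \<Longrightarrow> x j \<in> U \<Longrightarrow> \<exists>n. b j n \<subseteq> U"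
    and a: "\<And>F n. finite F \<Longrightarrow> a F n \<in> product_box T J F (\<lambda>j. b j n) \<inter> sigma_product_set T J z"
  obtains D where "D \<subseteq> J" "countable D" "x \<in> product_face T J z D"
    "\<And>W. openin (product_topology T J) W \<Longrightarrow> x \<in> W \<Longrightarrow>
       \<exists>F n. finite F \<and> a F n \<in> W \<inter> product_face T J z D"
proof -
  let ?supp = "\<lambda>y. {j \<in> J. y j \<noteq> z j}"
  have countable_supp: "countable (?supp y)" if "y \<in> sigma_product_set T J z" for y
    using that by (simp add: sigma_product_set_def)
  have "countable (\<Union>n. ?supp (a F n))" if "finite F" for F
    using a [OF that] countable_supp by (intro countable_UN) auto
  then obtain D where D: "?supp x \<subseteq> D" "countable D" "D \<subseteq> ?supp x \<union> (\<Union>F. \<Union>n. ?supp (a F n))"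
    and closed: "\<And>F. finite F \<Longrightarrow> F \<subseteq> D \<Longrightarrow> (\<Union>n. ?supp (a F n)) \<subseteq> D"
    using countable_closure_under_finite_subsets [of "?supp x" "\<lambda>F. \<Union>n. ?supp (a F n)"]
      countable_supp [OF x] by blast
  show thesis
  proof
    show "D \<subseteq> J" "countable D"
      using D by auto
    show "x \<in> product_face T J z D"
      using x D(1) by (auto simp: sigma_product_set_def product_face_def)
  next
    fix W assume W: "openin (product_topology T J) W" "x \<in> W"
    obtain F n where "finite F" and box_W: "product_box T J F (\<lambda>j. b j n) \<subseteq> W"
      by (rule product_topology_decseq_box_base [OF b_decseq b_base W])
    let ?y = "a (F \<inter> D) n"
    have y: "?y \<in> product_box T J (F \<inter> D) (\<lambda>j. b j n)" "?y \<in> sigma_product_set T J z"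
      using a \<open>finite F\<close> by auto
    have supp_y: "?supp ?y \<subseteq> D"
      using closed [of "F \<inter> D"] \<open>finite F\<close> by auto
    have "?y j \<in> b j n" if "j \<in> J" "j \<in> F" for j
    proof (cases "j \<in> D")
      case True
      then show ?thesis
        using y(1) that by (auto simp: product_box_def PiE_iff)
    next
      case False
      \<comment> \<open>Off D both points sit at the base point, and x lies in every box.\<close>
      then have "?y j = z j" "x j = z j"
        using subsetD [OF supp_y, of j] subsetD [OF D(1), of j] that by auto
      then show ?thesis
        using b_mem [OF \<open>j \<in> J\<close>] by simp
    qed
    then have "?y \<in> product_box T J F (\<lambda>j. b j n)"
      using y(1) by (auto simp: product_box_def PiE_iff)
    moreover have "?y \<in> product_face T J z D"
      using y(2) supp_y by (auto simp: sigma_product_set_def product_face_def)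
    ultimately show "\<exists>F n. finite F \<and> a F n \<in> W \<inter> product_face T J z D"
      using box_W \<open>finite F\<close> by blast
  qed
qed

lemma product_first_countable_decseq_bases:
  assumes fc: "\<And>j. j \<in> J \<Longrightarrow> first_countable (T j)"
    and x: "x \<in> topspace (product_topology T J)"
  obtains b :: "'j \<Rightarrow> nat \<Rightarrow> 'a set"
  where "\<And>j n. j \<in> J \<Longrightarrow> openin (T j) (b j n)" "\<And>j n. j \<in> J \<Longrightarrow> x j \<in> b j n"
    "\<And>j. j \<in> J \<Longrightarrow> decseq (b j)"
    "\<And>j U. j \<in> J \<Longrightarrow> openin (T j) U \<Longrightarrow> x j \<in> U \<Longrightarrow> \<exists>n. b j n \<subseteq> U"
proof -
  have "\<forall>j \<in> J. \<exists>c. (\<forall>n. openin (T j) (c n) \<and> x j \<in> c n) \<and> decseq c \<and>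
      (\<forall>U. openin (T j) U \<and> x j \<in> U \<longrightarrow> (\<exists>n. c n \<subseteq> U))"
  proof
    fix j assume "j \<in> J"
    then have "x j \<in> topspace (T j)"
      using x by auto
    then obtain c where "\<And>n. openin (T j) (c n)" "\<And>n. x j \<in> c n" "decseq c"
      "\<And>U. openin (T j) U \<Longrightarrow> x j \<in> U \<Longrightarrow> \<exists>n. c n \<subseteq> U"
      by (rule first_countable_decseq_base [OF fc [OF \<open>j \<in> J\<close>]]) blast
    then show "\<exists>c. (\<forall>n. openin (T j) (c n) \<and> x j \<in> c n) \<and> decseq c \<and>
        (\<forall>U. openin (T j) U \<and> x j \<in> U \<longrightarrow> (\<exists>n. c n \<subseteq> U))"
      by blast
  qed
  from bchoice [OF this] obtain b where b: "\<forall>j \<in> J. (\<forall>n. openin (T j) (b j n) \<and> x j \<in> b j n) \<and>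
      decseq (b j) \<and> (\<forall>U. openin (T j) U \<and> x j \<in> U \<longrightarrow> (\<exists>n. b j n \<subseteq> U))"
    by blast
  show thesis
    by (rule that [of b]) (use b in auto)
qed

lemma sigma_product_nbhd_if_openin_faces:
  assumes fc: "\<And>j. j \<in> J \<Longrightarrow> first_countable (T j)"
    and U: "U \<subseteq> sigma_product_set T J z" and "x \<in> U"
    and faces: "\<And>D. D \<subseteq> J \<Longrightarrow> countable D \<Longrightarrow>
      openin (subtopology (product_topology T J) (product_face T J z D)) (U \<inter> product_face T J z D)"
  shows "\<exists>W. openin (product_topology T J) W \<and> x \<in> W \<and> W \<inter> sigma_product_set T J z \<subseteq> U"
proof (rule ccontr)
  let ?P = "product_topology T J" and ?S = "sigma_product_set T J z"
  assume "\<nexists>W. openin ?P W \<and> x \<in> W \<and> W \<inter> ?S \<subseteq> U"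
  then have escape: "\<exists>y. y \<in> W \<inter> ?S \<and> y \<notin> U" if "openin ?P W" "x \<in> W" for W
    using that by blast
  have x: "x \<in> ?S"
    using \<open>x \<in> U\<close> U by blast
  then have x_top: "x \<in> topspace ?P"
    by (simp add: sigma_product_set_def)
  obtain b where b_open: "\<And>j n. j \<in> J \<Longrightarrow> openin (T j) (b j n)"
    and b_mem: "\<And>j n. j \<in> J \<Longrightarrow> x j \<in> b j n" and b_decseq: "\<And>j. j \<in> J \<Longrightarrow> decseq (b j)"
    and b_base: "\<And>j U. j \<in> J \<Longrightarrow> openin (T j) U \<Longrightarrow> x j \<in> U \<Longrightarrow> \<exists>n. b j n \<subseteq> U"
    by (rule product_first_countable_decseq_bases [OF fc x_top]) blast+
  define a where "a F n = (SOME y. y \<in> product_box T J F (\<lambda>j. b j n) \<inter> ?S \<and> y \<notin> U)" for F n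
  have a: "a F n \<in> product_box T J F (\<lambda>j. b j n) \<inter> ?S \<and> a F n \<notin> U" if "finite F" for F n
  proof -
    have "openin ?P (product_box T J F (\<lambda>j. b j n))"
      using that b_open by (rule openin_product_box)
    moreover have "x \<in> product_box T J F (\<lambda>j. b j n)"
      using x b_mem by (auto simp: product_box_def sigma_product_set_def)
    ultimately have "\<exists>y. y \<in> product_box T J F (\<lambda>j. b j n) \<inter> ?S \<and> y \<notin> U"
      by (rule escape)
    then show ?thesis
      unfolding a_def by (rule someI_ex)
  qed
  then have a_box: "a F n \<in> product_box T J F (\<lambda>j. b j n) \<inter> ?S" if "finite F" for F n
    using that by blast
  obtain D where D: "D \<subseteq> J" "countable D" "x \<in> product_face T J z D"
    and meets: "\<And>W. openin ?P W \<Longrightarrow> x \<in> W \<Longrightarrow> \<exists>F n. finite F \<and> a F n \<in> W \<inter> product_face T J z D"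
    using countable_face_meets_selection [OF x b_mem b_decseq b_base a_box] by blast
  obtain W where W: "openin ?P W" "U \<inter> product_face T J z D = W \<inter> product_face T J z D"
    using faces [OF D(1,2)] by (auto simp: openin_subtopology)
  then have "x \<in> W"
    using \<open>x \<in> U\<close> D(3) by blast
  then obtain F n where "finite F" "a F n \<in> W \<inter> product_face T J z D"
    using meets [OF W(1)] by blast
  then show False
    using W(2) a by blast
qed

lemma openin_sigma_product_if_openin_faces:
  assumes fc: "\<And>j. j \<in> J \<Longrightarrow> first_countable (T j)"
    and U: "U \<subseteq> sigma_product_set T J z"
    and faces: "\<And>D. D \<subseteq> J \<Longrightarrow> countable D \<Longrightarrow>
      openin (subtopology (product_topology T J) (product_face T J z D)) (U \<inter> product_face T J z D)"
  shows "openin (sigma_product T J z) U"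
  unfolding sigma_product_def openin_subopen [of _ U]
proof
  fix x assume "x \<in> U"
  then obtain W where "openin (product_topology T J) W" "x \<in> W" "W \<inter> sigma_product_set T J z \<subseteq> U"
    using sigma_product_nbhd_if_openin_faces [OF fc U _ faces] by blast
  then show "\<exists>V. openin (subtopology (product_topology T J) (sigma_product_set T J z)) V \<and> x \<in> V \<and> V \<subseteq> U"
    using \<open>x \<in> U\<close> U by (intro exI [of _ "W \<inter> sigma_product_set T J z"]) (auto simp: openin_subtopology)
qed

lemma product_face_subset_sigma_product_set:
  "countable D \<Longrightarrow> product_face T J z D \<subseteq> sigma_product_set T J z"
  by (auto simp: product_face_def sigma_product_set_def intro: countable_subset [of _ D])

lemma topspace_subtopology_product_face:
  "topspace (subtopology (product_topology T J) (product_face T J z D)) = product_face T J z D"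
  by (auto simp: product_face_def)

lemma sigma_product_set_eq_UN_product_face:
  "sigma_product_set T J z = (\<Union>D \<in> {D. D \<subseteq> J \<and> countable D}. product_face T J z D)"
proof
  show "sigma_product_set T J z \<subseteq> (\<Union>D \<in> {D. D \<subseteq> J \<and> countable D}. product_face T J z D)"
  proof
    fix y assume y: "y \<in> sigma_product_set T J z"
    then have "y \<in> product_face T J z {j \<in> J. y j \<noteq> z j}"
      by (auto simp: sigma_product_set_def product_face_def)
    moreover have "{j \<in> J. y j \<noteq> z j} \<in> {D. D \<subseteq> J \<and> countable D}"
      using y by (auto simp: sigma_product_set_def)
    ultimately show "y \<in> (\<Union>D \<in> {D. D \<subseteq> J \<and> countable D}. product_face T J z D)"
      by blast
  qed
qed (use product_face_subset_sigma_product_set in blast)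

theorem colimit_topology_product_faces_eq_sigma_product:
  assumes fc: "\<And>j. j \<in> J \<Longrightarrow> first_countable (T j)"
  shows "colimit_topology {D. D \<subseteq> J \<and> countable D}
           (\<lambda>D. subtopology (product_topology T J) (product_face T J z D))
         = sigma_product T J z"
proof -
  let ?I = "{D. D \<subseteq> J \<and> countable D}" and ?P = "product_topology T J"
  let ?F = "product_face T J z" and ?S = "sigma_product_set T J z"
  have opens: "(\<lambda>U. U \<subseteq> (\<Union>D \<in> ?I. ?F D) \<and> (\<forall>D \<in> ?I. openin (subtopology ?P (?F D)) (U \<inter> ?F D)))
        = openin (sigma_product T J z)"
  proof (intro ext iffI)
    fix U assume "U \<subseteq> (\<Union>D \<in> ?I. ?F D) \<and> (\<forall>D \<in> ?I. openin (subtopology ?P (?F D)) (U \<inter> ?F D))"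
    then show "openin (sigma_product T J z) U"
      using sigma_product_set_eq_UN_product_face [of T J z]
      by (intro openin_sigma_product_if_openin_faces [OF fc]) auto
  next
    fix U assume "openin (sigma_product T J z) U"
    then obtain W where W: "openin ?P W" "U = W \<inter> ?S"
      by (auto simp: sigma_product_def openin_subtopology)
    have "U \<inter> ?F D = W \<inter> ?F D" if "D \<in> ?I" for D
      using W(2) product_face_subset_sigma_product_set [of D T J z] that by auto
    then have "\<forall>D \<in> ?I. openin (subtopology ?P (?F D)) (U \<inter> ?F D)"
      using W(1) by (auto simp: openin_subtopology)
    moreover have "U \<subseteq> (\<Union>D \<in> ?I. ?F D)"
      using W(2) sigma_product_set_eq_UN_product_face by blast
    ultimately show "U \<subseteq> (\<Union>D \<in> ?I. ?F D) \<and> (\<forall>D \<in> ?I. openin (subtopology ?P (?F D)) (U \<inter> ?F D))"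
      by blast
  qed
  show ?thesis
    unfolding colimit_topology_def topspace_subtopology_product_face opens by (rule openin_inverse)
qed

lemma face_set_eq_product_face:
  assumes "\<And>j. j \<in> J \<Longrightarrow> topspace (T j) = carrier (G j)"
  shows "face_set G J D = product_face T J (\<lambda>j. \<one>\<^bsub>G j\<^esub>) D"
proof -
  have "topspace (product_topology T J) = (\<Pi>\<^sub>E j\<in>J. carrier (G j))"
    using assms by (auto intro: PiE_cong)
  then show ?thesis
    by (simp add: face_set_def product_face_def)
qed

theorem corollary2p5:
  fixes G :: "'j \<Rightarrow> ('a, 'b) monoid_scheme"
    and T :: "'j \<Rightarrow> 'a topology"
    and J :: "'j set"
  assumes tg: "\<And>j. j \<in> J \<Longrightarrow> topological_group (G j) (T j)"
    and metr: "\<And>j. j \<in> J \<Longrightarrow> metrizable_space (T j)"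
  shows "ACP {D. D \<subseteq> J \<and> countable D}
           (\<lambda>D. subtopology (product_topology T J) (face_set G J D)) (product_group J G)
       \<and> colimit_topology {D. D \<subseteq> J \<and> countable D}
           (\<lambda>D. subtopology (product_topology T J) (face_set G J D))
         = sigma_product T J (\<lambda>j. \<one>\<^bsub>G j\<^esub>)"
proof -
  let ?e = "\<lambda>j. \<one>\<^bsub>G j\<^esub>" and ?I = "{D. D \<subseteq> J \<and> countable D}"
  have grp: "\<And>j. j \<in> J \<Longrightarrow> group (G j)"
    and carrier: "\<And>j. j \<in> J \<Longrightarrow> topspace (T j) = carrier (G j)"
    using tg by (auto simp: topological_group_def)
  have faces: "face_set G J D = product_face T J ?e D" for D
    using carrier by (rule face_set_eq_product_face)
  have colim: "colimit_topology ?I (\<lambda>D. subtopology (product_topology T J) (product_face T J ?e D))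
      = sigma_product T J ?e"
    using metr metrizable_imp_first_countable by (blast intro: colimit_topology_product_faces_eq_sigma_product)
  have union: "(\<Union>D \<in> ?I. topspace (subtopology (product_topology T J) (product_face T J ?e D)))
      = sigma_product_set T J ?e"
    unfolding topspace_subtopology_product_face by (rule sigma_product_set_eq_UN_product_face [symmetric])
  have "topological_group (product_group J G\<lparr>carrier := sigma_product_set T J ?e\<rparr>) (sigma_product T J ?e)"
    unfolding sigma_product_def
    using topological_group_product [OF tg] subgroup_sigma_product_set [OF grp carrier]
    by (rule topological_group_subgroup)
  then show ?thesis
    unfolding ACP_def faces colim union by simp
qed

end
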